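(* Let $1<a_1<a_2$ be coprime integers. For every $r\in\left(0,\frac{a_2}{a_1+a_2}\right)$ there exists $T$ such that if $t\ge T$, then $\mu_t'(r)<-\frac{1}{a_2}$.
   Context: For $t\in[1,\infty)$ and $(u,v)\in\mathbb{R}^2$, $\|(u,v)\|_t=(|u|^t+|v|^t)^{1/t}$. Define $\mu_t(r)=\left\|\left(\frac{1-r}{a_1},\frac{r}{a_2}\right)\right\|_t$ for $r\in[0,1]$; $\mu_t'$ denotes the derivative with respect to $r$. *)

theory Defs
  imports "HOL-Analysis.Analysis"
begin

definition tnorm :: "real \<Rightarrow> real \<Rightarrow> real \<Rightarrow> real" where
  "tnorm t u v = (\<bar>u\<bar> powr t + \<bar>v\<bar> powr t) powr (1 / t)"

definition mu :: "int \<Rightarrow> int \<Rightarrow> real \<Rightarrow> real \<Rightarrow> real" where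
  "mu a1 a2 t r = tnorm t ((1 - r) / real_of_int a1) (r / real_of_int a2)"

end

theory Submission
  imports Defs
begin

(* For positive u, v the derivative of x \<mapsto> (u(x)^t + v(x)^t)^(1/t) factors as
   (1 + s^t)^(1/t - 1) (u' + s^(t-1) v') with s = v/u.  For mu_t at r we have u' = -1/a1,
   v' = 1/a2 and s = a1 r / (a2 (1 - r)), and the hypothesis r < a2/(a1 + a2) says exactly that
   s < 1.  Hence s^t -> 0, so the derivative tends to -1/a1 < -1/a2 as t -> \<infinity>. *)

lemma tendsto_powr_base_less_1:
  fixes s :: real
  assumes "0 < s" "s < 1" "filterlim g at_top F"
  shows "((\<lambda>x. s powr g x) \<longlongrightarrow> 0) F"
proof -
  have "ln s < 0" using assms by simp
  then have "filterlim (\<lambda>x. ln s * g x) at_bot F"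
    by (rule filterlim_tendsto_neg_mult_at_bot[OF tendsto_const _ assms(3)])
  from filterlim_compose[OF exp_at_bot this] show ?thesis
    using assms by (simp add: powr_def o_def mult.commute)
qed

lemma powr_sum_root_exponent_split:
  fixes u v t :: real
  assumes "0 < u" "0 < v" "t \<noteq> 0"
  shows "(u powr t + v powr t) powr (1/t - 1)
           = u powr (1 - t) * (1 + (v/u) powr t) powr (1/t - 1)"
proof -
  have "u powr t + v powr t = u powr t * (1 + (v/u) powr t)"
    using assms by (simp add: powr_divide field_simps)
  moreover have "(u powr t) powr (1/t - 1) = u powr (1 - t)"
    using assms by (simp add: powr_powr right_diff_distrib)
  ultimately show ?thesis
    by (simp add: powr_mult add_pos_nonneg)
qed

lemma DERIV_powr_sum_root:
  fixes f g :: "real \<Rightarrow> real"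
  assumes f: "(f has_real_derivative f') (at x)" and g: "(g has_real_derivative g') (at x)"
    and pos: "0 < f x" "0 < g x" and "t \<noteq> 0"
  shows "((\<lambda>y. (f y powr t + g y powr t) powr (1/t)) has_real_derivative
           (1 + (g x / f x) powr t) powr (1/t - 1) * (f' + (g x / f x) powr (t - 1) * g')) (at x)"
proof -
  define u v where "u = f x" and "v = g x"
  define s where "s = v / u"
  have "0 < u" "0 < v" using pos unfolding u_def v_def by simp_all
  have "0 < f x powr t + g x powr t" using pos by (intro add_pos_pos) auto
  from DERIV_fun_powr[OF DERIV_add[OF DERIV_fun_powr[OF f pos(1), of t] DERIV_fun_powr[OF g pos(2), of t]]
      this, of "1/t"]
  have deriv: "((\<lambda>y. (f y powr t + g y powr t) powr (1/t)) has_real_derivative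
          1/t * (u powr t + v powr t) powr (1/t - 1)
            * (t * u powr (t - 1) * f' + t * v powr (t - 1) * g')) (at x)"
    unfolding u_def v_def by simp
  have u_inverse: "u powr (1 - t) * u powr (t - 1) = 1"
  proof -
    have "u powr (1 - t) * u powr (t - 1) = u powr ((1 - t) + (t - 1))" by (simp only: powr_add)
    also have "\<dots> = 1" using \<open>0 < u\<close> by simp
    finally show ?thesis .
  qed
  have "1/t * (u powr t + v powr t) powr (1/t - 1)
          * (t * u powr (t - 1) * f' + t * v powr (t - 1) * g')
        = (1 + s powr t) powr (1/t - 1)
          * ((u powr (1 - t) * u powr (t - 1)) * f' + (u powr (1 - t) * v powr (t - 1)) * g')"
    using powr_sum_root_exponent_split[OF \<open>0 < u\<close> \<open>0 < v\<close> \<open>t \<noteq> 0\<close>] \<open>t \<noteq> 0\<close>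
    unfolding s_def by (simp add: field_simps)
  also have "\<dots> = (1 + s powr t) powr (1/t - 1) * (f' + s powr (t - 1) * g')"
    using u_inverse \<open>0 < u\<close> \<open>0 < v\<close> unfolding s_def by (simp add: powr_divide field_simps)
  finally show ?thesis
    using deriv unfolding s_def u_def v_def by simp
qed

lemma tnorm_nonneg_eq:
  assumes "0 \<le> u" "0 \<le> v"
  shows "tnorm t u v = (u powr t + v powr t) powr (1/t)"
  using assms by (simp add: tnorm_def)

lemma deriv_mu:
  fixes a1 a2 :: int
  assumes "0 < a1" "0 < a2" "0 < r" "r < 1" "t \<noteq> 0"
  defines "s \<equiv> (r / a2) / ((1 - r) / a1)"
  shows "deriv (mu a1 a2 t) r = (1 + s powr t) powr (1/t - 1) * (- 1 / a1 + s powr (t - 1) / a2)"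
proof -
  have "\<forall>\<^sub>F x in nhds r. x \<in> {0<..<1}"
    using assms by (intro eventually_nhds_in_open) auto
  then have "\<forall>\<^sub>F x in nhds r.
      mu a1 a2 t x = (((1 - x) / a1) powr t + (x / a2) powr t) powr (1/t)"
    by eventually_elim (use assms in \<open>simp add: mu_def tnorm_nonneg_eq\<close>)
  moreover have "((\<lambda>x. (((1 - x) / a1) powr t + (x / a2) powr t) powr (1/t)) has_real_derivative
      (1 + s powr t) powr (1/t - 1) * (- 1 / a1 + s powr (t - 1) * (1 / a2))) (at r)"
  proof -
    have "((\<lambda>x. (1 - x) / a1) has_real_derivative - 1 / a1) (at r)"
      "((\<lambda>x. x / a2) has_real_derivative 1 / a2) (at r)"
      using assms by (auto intro!: derivative_eq_intros)
    from DERIV_powr_sum_root[OF this] show ?thesis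
      using assms by simp
  qed
  ultimately have "(mu a1 a2 t has_real_derivative
      (1 + s powr t) powr (1/t - 1) * (- 1 / a1 + s powr (t - 1) / a2)) (at r)"
    by (subst DERIV_cong_ev[OF refl _ refl]) auto
  then show ?thesis by (rule DERIV_imp_deriv)
qed

lemma tendsto_powr_sum_root_slope:
  fixes s c d :: real
  assumes "0 < s" "s < 1"
  shows "((\<lambda>t. (1 + s powr t) powr (1/t - 1) * (c + s powr (t - 1) * d)) \<longlongrightarrow> c) at_top"
proof -
  have "filterlim (\<lambda>t::real. t - 1) at_top at_top"
    by (rule filterlim_tendsto_add_at_top[OF tendsto_const filterlim_ident, of "-1", simplified])
  then have "((\<lambda>t. s powr (t - 1)) \<longlongrightarrow> 0) at_top"
    using assms by (rule tendsto_powr_base_less_1[rotated 2])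
  moreover have "((\<lambda>t. s powr t) \<longlongrightarrow> 0) at_top"
    using assms filterlim_ident by (rule tendsto_powr_base_less_1)
  moreover have "((\<lambda>t::real. 1/t) \<longlongrightarrow> 0) at_top"
    by (intro tendsto_divide_0[OF tendsto_const] filterlim_at_top_imp_at_infinity filterlim_ident)
  ultimately have "((\<lambda>t. (1 + s powr t) powr (1/t - 1) * (c + s powr (t - 1) * d))
      \<longlongrightarrow> (1 + 0) powr (0 - 1) * (c + 0 * d)) at_top"
    by (intro tendsto_intros) auto
  then show ?thesis by simp
qed

lemma mu_ratio_less_1:
  fixes a1 a2 :: int
  assumes "0 < a1" "0 < a2" "0 < r" "r < real_of_int a2 / real_of_int (a1 + a2)"
  shows "r < 1" and "(r / a2) / ((1 - r) / a1) < 1"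
proof -
  have "real_of_int a2 / real_of_int (a1 + a2) < 1"
    using assms(1,2) by simp
  with assms(4) show "r < 1" by linarith
  have "0 < real_of_int (a1 + a2)" using assms(1,2) by simp
  then have "r * a1 < (1 - r) * a2"
    using assms(4) by (simp add: pos_less_divide_eq algebra_simps)
  moreover have "(r / a2) / ((1 - r) / a1) = (r * a1) / ((1 - r) * a2)"
    using assms(1,2) by (simp add: field_simps)
  ultimately show "(r / a2) / ((1 - r) / a1) < 1"
    using assms(2) \<open>r < 1\<close> by (simp add: divide_less_eq_1 mult.commute)
qed

theorem corollary2:
  fixes a1 a2 :: int and r :: real
  assumes "1 < a1" and "a1 < a2" and "coprime a1 a2"
    and "0 < r" and "r < real_of_int a2 / real_of_int (a1 + a2)"
  shows "\<exists>T::real. \<forall>t::real. t \<ge> T \<longrightarrow>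
           deriv (mu a1 a2 t) r < - 1 / real_of_int a2"
proof -
  define s where "s = (r / a2) / ((1 - r) / a1)"
  have "0 < a1" "0 < a2" using assms(1,2) by simp_all
  with mu_ratio_less_1[OF _ _ assms(4,5)] have "r < 1" "s < 1" unfolding s_def by simp_all
  moreover have "0 < s" unfolding s_def using \<open>0 < a1\<close> \<open>0 < a2\<close> assms(4) \<open>r < 1\<close> by simp
  ultimately have "((\<lambda>t. (1 + s powr t) powr (1/t - 1) * (- 1 / a1 + s powr (t - 1) * (1 / a2)))
      \<longlongrightarrow> - 1 / a1) at_top"
    by (intro tendsto_powr_sum_root_slope)
  moreover have "- 1 / real_of_int a1 < - 1 / a2"
    using assms(2) \<open>0 < a1\<close> by (simp add: field_simps)
  ultimately have "\<forall>\<^sub>F t in at_top.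
      (1 + s powr t) powr (1/t - 1) * (- 1 / a1 + s powr (t - 1) * (1 / a2)) < - 1 / a2"
    by (rule order_tendstoD(2))
  moreover have "\<forall>\<^sub>F t::real in at_top. t \<noteq> 0"
    using eventually_gt_at_top[of 0] by eventually_elim simp
  ultimately have "\<forall>\<^sub>F t in at_top. deriv (mu a1 a2 t) r < - 1 / a2"
    by eventually_elim (simp add: deriv_mu[OF \<open>0 < a1\<close> \<open>0 < a2\<close> assms(4) \<open>r < 1\<close>] s_def)
  then show ?thesis
    by (auto simp: eventually_at_top_linorder)
qed

end
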